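(* Let $(Y_n)$ satisfy Condition 1 with constant $\alpha$ and fix an integer $a\ge1$. For $i=1,\dots,a$ let $\pi_i(n)$ be the probability that the leader election process started with $n$ players and stopped as soon as at most $a$ players remain ends with exactly $i$ players. Then there are continuous, locally Lipschitz functions $\psi_i$ on $(0,\infty)$ with $\psi_i(\alpha t)=\psi_i(t)$ for all $t>0$, such that $\pi_i(n)=\psi_i(n)+o(1)$ as $n\to\infty$, for $i=1,\dots,a$.
   Context: Condition 1: $(Y_n)_{n\ge1}$ is a sequence of random variables with $1\le Y_n\le n$ for all $n$ and $\Pr(Y_n=n)<1$ for $n\ge2$, such that: (i) $\Pr(Y_n\le k)\ge\Pr(Y_{n+1}\le k)$ for all $n,k\ge1$; (ii) there are constants $\alpha\in(0,1)$, $\varepsilon>0$ and $\delta_n=O((\log n)^{-1-\varepsilon})$ with $\mathbb E Y_{n+1}-\mathbb E Y_n=\alpha+O(\delta_n)$; (iii) $\Pr(|Y_n-\alpha n|>\delta_n n)=O(n^{-2-\varepsilon})$. Leader election process: $N_0=n$ and $(N_k)$ is the Markov chain on $\{1,2,\dots\}$ with $\Pr(N_{k+1}=j\mid N_k=i)=\Pr(Y_i=j)$; the stopped process ends at the first $k$ with $N_k\le a$, with $N_k$ players. *)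

theory Defs
  imports "HOL-Probability.Probability" "HOL-Library.Landau_Symbols"
begin

definition le_step :: "(nat \<Rightarrow> nat pmf) \<Rightarrow> nat \<Rightarrow> nat \<Rightarrow> nat pmf" where
  "le_step Y a m = (if m \<le> a then return_pmf m else Y m)"

definition le_dist :: "(nat \<Rightarrow> nat pmf) \<Rightarrow> nat \<Rightarrow> nat \<Rightarrow> nat \<Rightarrow> nat pmf" where
  "le_dist Y a n k = ((\<lambda>p. bind_pmf p (le_step Y a)) ^^ k) (return_pmf n)"

text \<open>The events "stopped at i by time k"
  increase in k, so this is the limit of their probabilities.\<close>
definition le_end_prob :: "(nat \<Rightarrow> nat pmf) \<Rightarrow> nat \<Rightarrow> nat \<Rightarrow> nat \<Rightarrow> real" where
  "le_end_prob Y a i n = lim (\<lambda>k. pmf (le_dist Y a n k) i)"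

definition condition1 :: "(nat \<Rightarrow> nat pmf) \<Rightarrow> real \<Rightarrow> bool" where
  "condition1 Y \<alpha> \<longleftrightarrow>
     (\<forall>n\<ge>1. set_pmf (Y n) \<subseteq> {1..n}) \<and>
     (\<forall>n\<ge>2. pmf (Y n) n < 1) \<and>
     (\<forall>n\<ge>1. \<forall>k\<ge>1. measure_pmf.prob (Y n) {..k} \<ge> measure_pmf.prob (Y (n+1)) {..k}) \<and>
     0 < \<alpha> \<and> \<alpha> < 1 \<and>
     (\<exists>\<epsilon>::real. \<exists>\<delta>::nat \<Rightarrow> real. \<epsilon> > 0 \<and>
        \<delta> \<in> O(\<lambda>n. ln (real n) powr (-1 - \<epsilon>)) \<and>
        (\<lambda>n. measure_pmf.expectation (Y (n+1)) real - measure_pmf.expectation (Y n) real - \<alpha>)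
           \<in> O(\<delta>) \<and>
        (\<lambda>n. measure_pmf.prob (Y n) {j. \<bar>real j - \<alpha> * real n\<bar> > \<delta> n * real n})
           \<in> O(\<lambda>n. real n powr (-2 - \<epsilon>)))"

end

theory Submission
  imports Defs "HOL-Real_Asymp.Real_Asymp"
begin

(*
  By first-step analysis \<pi> is harmonic for the kernel Y above a, i.e.
  \<pi>(n) = E \<pi>(Y n) for n > a, and 0 \<le> \<pi> \<le> 1.  The proof has three stages.

  Abel summation writes \<pi>(n+1) - \<pi>(n) as an average of increments
     \<pi>(l+1) - \<pi>(l) whose weights P(Y n \<le> l) - P(Y (n+1) \<le> l) are nonnegative (monotonicity),
     have total mass E Y (n+1) - E Y n \<approx> \<alpha>, and concentrate on l \<approx> \<alpha> n.  A strong induction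
     with a slowly growing "budget" factor then gives |\<pi>(n+1) - \<pi>(n)| = O(1/n), hence a
     relative Lipschitz bound |\<pi> j - \<pi> m| \<le> K |j - m| / min j m.
  2. Slow variation.  Harmonicity, concentration of Y n around \<alpha> n and step 1 give
     |\<pi>(n) - \<pi>(m)| = O((log n)^(-1-\<epsilon>)) whenever |m - \<alpha> n| \<le> 2.
  3. Log-periodic limit.  These errors are summable along every geometric orbit t/\<alpha>^k, so
     \<psi>(t) = lim_k \<pi>(\<lfloor>t/\<alpha>^k\<rfloor>) exists, satisfies \<psi>(\<alpha> t) = \<psi>(t), approximates \<pi>(n), and
     inherits local Lipschitz continuity from step 1.
*)

lemma funpow_bind_pmf:
  fixes p :: "'a pmf" and g :: "'a \<Rightarrow> 'a pmf"
  shows "((\<lambda>p. bind_pmf p g) ^^ k) p = bind_pmf p (\<lambda>j. ((\<lambda>p. bind_pmf p g) ^^ k) (return_pmf j))"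
proof (induction k arbitrary: p)
  case 0
  show ?case by (simp add: bind_return_pmf')
next
  case (Suc k)
  have "((\<lambda>p. bind_pmf p g) ^^ Suc k) p = bind_pmf (((\<lambda>p. bind_pmf p g) ^^ k) p) g" by simp
  also have "\<dots> = bind_pmf p (\<lambda>j. bind_pmf (((\<lambda>p. bind_pmf p g) ^^ k) (return_pmf j)) g)"
    by (subst Suc) (simp add: bind_assoc_pmf)
  finally show ?case by simp
qed

lemma le_dist_Suc_first:
  assumes "a < n"
  shows "le_dist Y a n (Suc k) = bind_pmf (Y n) (\<lambda>j. le_dist Y a j k)"
proof -
  have "le_dist Y a n (Suc k)
      = ((\<lambda>p. bind_pmf p (le_step Y a)) ^^ k) (bind_pmf (return_pmf n) (le_step Y a))"
    unfolding le_dist_def by (simp only: funpow_Suc_right o_def)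
  also have "\<dots> = ((\<lambda>p. bind_pmf p (le_step Y a)) ^^ k) (Y n)"
    using assms by (simp add: bind_return_pmf le_step_def)
  finally show ?thesis by (subst (asm) funpow_bind_pmf) (simp add: le_dist_def)
qed

text \<open>A state i \<le> a, once reached, is kept; so the probability of being at i grows with time.\<close>

lemma le_dist_mono:
  assumes "i \<le> a"
  shows "pmf (le_dist Y a n k) i \<le> pmf (le_dist Y a n (Suc k)) i"
proof -
  let ?p = "le_dist Y a n k"
  have "pmf ?p i = measure_pmf.expectation ?p (\<lambda>m. indicator {i} m * pmf (le_step Y a i) i)"
    using assms by (simp add: le_step_def measure_pmf_single)
  also have "\<dots> \<le> measure_pmf.expectation ?p (\<lambda>m. pmf (le_step Y a m) i)"
    by (intro integral_mono measure_pmf.integrable_const_bound[where B=1])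
       (auto simp: indicator_def pmf_le_1)
  also have "\<dots> = pmf (le_dist Y a n (Suc k)) i"
    by (simp add: le_dist_def pmf_bind)
  finally show ?thesis .
qed

lemma le_end_prob_lim:
  assumes "i \<le> a"
  shows "(\<lambda>k. pmf (le_dist Y a n k) i) \<longlonglongrightarrow> le_end_prob Y a i n"
proof -
  have "incseq (\<lambda>k. pmf (le_dist Y a n k) i)"
    by (rule incseq_SucI) (use le_dist_mono[OF assms] in auto)
  moreover have "Bseq (\<lambda>k. pmf (le_dist Y a n k) i)"
    by (intro BseqI'[where K=1]) (simp add: pmf_le_1)
  ultimately have "convergent (\<lambda>k. pmf (le_dist Y a n k) i)"
    by (intro Bseq_monoseq_convergent) (auto simp: monoseq_def incseq_def)
  then show ?thesis unfolding le_end_prob_def by (simp add: convergent_LIMSEQ_iff)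
qed

lemma le_end_prob_bounds:
  assumes "i \<le> a"
  shows "0 \<le> le_end_prob Y a i n \<and> le_end_prob Y a i n \<le> 1"
  using LIMSEQ_le_const[OF le_end_prob_lim[OF assms]] LIMSEQ_le_const2[OF le_end_prob_lim[OF assms]]
  by (auto simp: pmf_le_1)

lemma le_end_prob_harmonic:
  assumes "i \<le> a" "a < n" "set_pmf (Y n) \<subseteq> {1..n}"
  shows "le_end_prob Y a i n = measure_pmf.expectation (Y n) (\<lambda>j. le_end_prob Y a i j)"
proof -
  have eq: "pmf (le_dist Y a n (Suc k)) i = (\<Sum>j\<in>{1..n}. pmf (le_dist Y a j k) i * pmf (Y n) j)" for k
    using assms
    by (simp add: le_dist_Suc_first pmf_bind integral_measure_pmf_real[where A="{1..n}"] subset_iff)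
  have "(\<lambda>k. pmf (le_dist Y a n (Suc k)) i) \<longlonglongrightarrow> (\<Sum>j\<in>{1..n}. le_end_prob Y a i j * pmf (Y n) j)"
    unfolding eq by (intro tendsto_intros le_end_prob_lim assms)
  moreover have "(\<lambda>k. pmf (le_dist Y a n (Suc k)) i) \<longlonglongrightarrow> le_end_prob Y a i n"
    using le_end_prob_lim[OF assms(1)] by (rule LIMSEQ_Suc)
  ultimately have "le_end_prob Y a i n = (\<Sum>j\<in>{1..n}. le_end_prob Y a i j * pmf (Y n) j)"
    using LIMSEQ_unique by blast
  also have "\<dots> = measure_pmf.expectation (Y n) (\<lambda>j. le_end_prob Y a i j)"
    using assms by (subst integral_measure_pmf_real[where A="{1..n}"]) auto
  finally show ?thesis .
qed

lemma expectation_abel_summation: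
  fixes p :: "nat pmf" and f :: "nat \<Rightarrow> real"
  assumes "set_pmf p \<subseteq> {1..N}"
  shows "measure_pmf.expectation p f
           = f N - (\<Sum>l=1..<N. measure_pmf.prob p {..l} * (f (Suc l) - f l))"
proof -
  have E: "measure_pmf.expectation p f = (\<Sum>j\<in>{1..N}. f j * pmf p j)"
    using assms by (subst integral_measure_pmf_real[where A="{1..N}"]) auto
  have P: "measure_pmf.prob p {..l} = (\<Sum>j\<in>{1..N}. indicator {..l} j * pmf p j)" for l
  proof -
    have "measure_pmf.prob p {..l} = measure_pmf.expectation p (indicator {..l})" by simp
    also have "\<dots> = (\<Sum>j\<in>{1..N}. indicator {..l} j * pmf p j)"
      using assms by (subst integral_measure_pmf_real[where A="{1..N}"]) auto
    finally show ?thesis .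
  qed
  have one: "(\<Sum>j\<in>{1..N}. pmf p j) = 1"
    using assms by (simp add: measure_measure_pmf_finite[symmetric] measure_pmf.prob_eq_1
                               AE_measure_pmf_iff subset_iff)
  have inner: "(\<Sum>l=1..<N. indicator {..l} j * pmf p j * (f (Suc l) - f l)) = pmf p j * (f N - f j)"
    if j: "j \<in> {1..N}" for j
  proof -
    have "(\<Sum>l=1..<N. indicator {..l} j * pmf p j * (f (Suc l) - f l))
        = (\<Sum>l\<in>{l\<in>{1..<N}. j \<le> l}. pmf p j * (f (Suc l) - f l))"
      unfolding sum.inter_filter[OF finite_atLeastLessThan]
      by (intro sum.cong) (auto simp: indicator_def)
    also have "{l\<in>{1..<N}. j \<le> l} = {j..<N}" using j by auto
    finally show ?thesis using j by (simp add: sum_distrib_left[symmetric] sum_Suc_diff')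
  qed
  have "(\<Sum>l=1..<N. measure_pmf.prob p {..l} * (f (Suc l) - f l))
      = (\<Sum>j\<in>{1..N}. \<Sum>l=1..<N. indicator {..l} j * pmf p j * (f (Suc l) - f l))"
    by (simp only: P sum_distrib_right sum.swap[of _ "{1..<N}"])
  also have "\<dots> = (\<Sum>j\<in>{1..N}. pmf p j * (f N - f j))"
    using inner by simp
  also have "\<dots> = f N * (\<Sum>j\<in>{1..N}. pmf p j) - (\<Sum>j\<in>{1..N}. f j * pmf p j)"
    by (simp add: algebra_simps sum_subtractf sum_distrib_left)
  finally show ?thesis using E one by simp
qed

lemma expectation_increment:
  fixes Y :: "nat \<Rightarrow> nat pmf" and f :: "nat \<Rightarrow> real"
  assumes "set_pmf (Y n) \<subseteq> {1..n}" "set_pmf (Y (Suc n)) \<subseteq> {1..Suc n}"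
  shows "measure_pmf.expectation (Y (Suc n)) f - measure_pmf.expectation (Y n) f
    = (\<Sum>l=1..<Suc n. (measure_pmf.prob (Y n) {..l} - measure_pmf.prob (Y (Suc n)) {..l})
                        * (f (Suc l) - f l))"
proof -
  have supp: "set_pmf (Y n) \<subseteq> {1..Suc n}" using assms(1) by auto
  show ?thesis
    unfolding expectation_abel_summation[OF supp, of f] expectation_abel_summation[OF assms(2), of f]
    by (simp add: sum_subtractf left_diff_distrib)
qed

text \<open>This turns error terms of order
  \<open>(log n)\<^sup>-\<^sup>1\<^sup>-\<^sup>e\<close> into telescoping differences.\<close>

lemma powr_neg_decrement:
  fixes u L e :: real
  assumes "0 < u" "0 < L" "0 < e"
  shows "e * L * (u + L) powr (-1-e) \<le> u powr (-e) - (u + L) powr (-e)"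
proof -
  have "\<exists>z>u. z < u + L \<and> (u + L) powr (-e) - u powr (-e) = ((u + L) - u) * ((-e) * z powr (-e - 1))"
    apply (rule MVT2)
    using assms apply simp
    subgoal for x using has_real_derivative_powr[of x "-e"] assms by simp
    done
  then obtain z where z: "u < z" "z < u + L"
    and eq: "(u + L) powr (-e) - u powr (-e) = L * ((-e) * z powr (-e - 1))" by auto
  have exponent: "-e - 1 = -1 - e" by simp
  have "(u + L) powr (-1-e) \<le> z powr (-1-e)"
    using z assms by (intro powr_mono2') auto
  then have "e * L * (u + L) powr (-1-e) \<le> e * L * z powr (-1-e)"
    using assms by (intro mult_left_mono) auto
  also have "\<dots> = u powr (-e) - (u + L) powr (-e)"
    using eq unfolding exponent by (simp add: algebra_simps)
  finally show ?thesis .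
qed

lemma eventually_div_power_ge:
  fixes \<alpha> t B :: real
  assumes "0 < \<alpha>" "\<alpha> < 1" "0 < t"
  shows "eventually (\<lambda>k. B \<le> t / \<alpha> ^ k) sequentially"
proof -
  have "(\<lambda>k. \<alpha> ^ k) \<longlonglongrightarrow> 0" using assms by (intro LIMSEQ_realpow_zero) auto
  moreover have "0 < t / (\<bar>B\<bar> + 1)" using assms by auto
  ultimately have "eventually (\<lambda>k. \<alpha> ^ k < t / (\<bar>B\<bar> + 1)) sequentially"
    by (rule order_tendstoD)
  then show ?thesis
  proof (rule eventually_mono)
    fix k assume "\<alpha> ^ k < t / (\<bar>B\<bar> + 1)"
    then have "\<bar>B\<bar> + 1 < t / \<alpha> ^ k" using assms by (simp add: field_simps)
    then show "B \<le> t / \<alpha> ^ k" by linarith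
  qed
qed

lemma eventually_real_ge: "eventually (\<lambda>n::nat. c \<le> real n) sequentially"
  by (rule filterlim_real_sequentially[unfolded filterlim_at_top, rule_format])

lemma eventually_le_of_tendsto_zero:
  fixes g :: "nat \<Rightarrow> real"
  assumes "g \<longlonglongrightarrow> 0" "0 < c"
  shows "eventually (\<lambda>n. g n \<le> c) sequentially"
  using order_tendstoD(2)[OF assms] by (rule eventually_mono) auto

lemma powr_minus_two: "0 < (x::real) \<Longrightarrow> x * x powr (-2-e) = x powr (-e) / x"
  by (simp add: powr_add[symmetric] powr_minus field_simps power2_eq_square)

lemma increments_lipschitz:
  fixes g :: "nat \<Rightarrow> real" and X K :: real
  assumes X: "0 < X" and step: "\<And>l. X \<le> real l \<Longrightarrow> \<bar>g (Suc l) - g l\<bar> \<le> K / real l"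
    and j: "X \<le> real j" and m: "X \<le> real m"
  shows "\<bar>g j - g m\<bar> \<le> K * \<bar>real j - real m\<bar> / min (real j) (real m)"
proof -
  have chain: "\<bar>g (i + k) - g i\<bar> \<le> K * real k / real i" if i: "X \<le> real i" for i k
  proof (induction k)
    case 0 then show ?case by simp
  next
    case (Suc k)
    have ipos: "0 < real i" using X i by linarith
    have "0 \<le> K / real i" using step[OF i] by (meson abs_ge_zero order_trans)
    then have K: "0 \<le> K" using ipos by (simp add: zero_le_divide_iff)
    have "\<bar>g (Suc (i + k)) - g (i + k)\<bar> \<le> K / real (i + k)" using i by (intro step) auto
    also have "\<dots> \<le> K / real i" using K ipos by (intro divide_left_mono) auto
    finally have "\<bar>g (i + Suc k) - g i\<bar> \<le> K / real i + K * real k / real i" using Suc by simp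
    also have "\<dots> = K * real (Suc k) / real i" by (simp add: add_divide_distrib[symmetric] algebra_simps)
    finally show ?case .
  qed
  show ?thesis
  proof (cases "j \<le> m")
    case True
    then obtain k where "m = j + k" using le_Suc_ex by blast
    with chain[OF j, of k] True show ?thesis by (simp add: abs_minus_commute min_def)
  next
    case False
    then obtain k where "j = m + k" using le_Suc_ex[of m j] by auto
    with chain[OF m, of k] False show ?thesis by (simp add: min_def)
  qed
qed

lemma weighted_sum_bound:
  fixes w g :: "nat \<Rightarrow> real" and I W :: "nat set"
  assumes "finite I" and w: "\<And>l. l \<in> I \<Longrightarrow> 0 \<le> w l" and g: "\<And>l. l \<in> I \<Longrightarrow> \<bar>g l\<bar> \<le> 1"
    and inside: "\<And>l. l \<in> I \<Longrightarrow> l \<in> W \<Longrightarrow> \<bar>g l\<bar> \<le> b"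
    and outside: "\<And>l. l \<in> I \<Longrightarrow> l \<notin> W \<Longrightarrow> w l \<le> t" and "0 \<le> b" "0 \<le> t"
  shows "\<bar>\<Sum>l\<in>I. w l * g l\<bar> \<le> b * (\<Sum>l\<in>I. w l) + real (card I) * t"
proof -
  have "\<bar>w l * g l\<bar> \<le> b * w l + t" if l: "l \<in> I" for l
  proof (cases "l \<in> W")
    case True
    then have "w l * \<bar>g l\<bar> \<le> w l * b" using inside[OF l] w[OF l] by (intro mult_left_mono)
    then show ?thesis using w[OF l] \<open>0 \<le> t\<close> by (simp add: abs_mult mult.commute)
  next
    case False
    have "w l * \<bar>g l\<bar> \<le> w l * 1" using g[OF l] w[OF l] by (intro mult_left_mono)
    moreover have "0 \<le> b * w l" using w[OF l] \<open>0 \<le> b\<close> by simp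
    ultimately show ?thesis using w[OF l] outside[OF l False] by (simp add: abs_mult)
  qed
  then have "\<bar>\<Sum>l\<in>I. w l * g l\<bar> \<le> (\<Sum>l\<in>I. b * w l + t)"
    by (intro order_trans[OF sum_abs sum_mono])
  also have "\<dots> = b * (\<Sum>l\<in>I. w l) + real (card I) * t"
    by (simp add: sum.distrib sum_distrib_left)
  finally show ?thesis .
qed

lemma expectation_const_pmf: "measure_pmf.expectation (p :: 'a pmf) (\<lambda>x. c) = (c :: real)"
  using measure_pmf.prob_space[of p] by (simp add: lebesgue_integral_const)

lemma expectation_deviation_bound:
  fixes p :: "'a pmf" and g :: "'a \<Rightarrow> real"
  assumes g: "\<And>j. \<bar>g j\<bar> \<le> G" and dev: "\<And>j. \<bar>g j - c\<bar> \<le> b + indicator B j" and "0 \<le> b"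
  shows "\<bar>measure_pmf.expectation p g - c\<bar> \<le> b + measure_pmf.prob p B"
proof -
  have int_g: "integrable (measure_pmf p) g"
    by (rule measure_pmf.integrable_const_bound[where B=G]) (use g in auto)
  have int_B: "integrable (measure_pmf p) (indicator B :: 'a \<Rightarrow> real)"
    by (rule measure_pmf.integrable_const_bound[where B=1]) (auto simp: indicator_def)
  have "\<bar>measure_pmf.expectation p g - c\<bar> = \<bar>measure_pmf.expectation p (\<lambda>j. g j - c)\<bar>"
    using int_g by (simp add: expectation_const_pmf)
  also have "\<dots> \<le> measure_pmf.expectation p (\<lambda>j. \<bar>g j - c\<bar>)"
    using integral_norm_bound[of p "\<lambda>j. g j - c"] by simp
  also have "\<dots> \<le> measure_pmf.expectation p (\<lambda>j. b + indicator B j)"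
    using int_g int_B dev by (intro integral_mono) auto
  also have "\<dots> = b + measure_pmf.prob p B"
    using int_B by (simp add: expectation_const_pmf)
  finally show ?thesis .
qed

text \<open>Elementary inequality behind one step of the induction in \<open>increment_step\<close>: with
  \<open>d \<le> \<alpha>/2\<close>, the factor \<open>(\<alpha> + C d)/(\<alpha> - d)\<close> exceeds 1 by at most \<open>4 (C + 1) d/\<alpha>\<close>.\<close>

lemma window_recursion_arith:
  fixes \<alpha> d n M P C T s Q :: real
  assumes "0 < \<alpha>" "0 \<le> d" "d \<le> \<alpha>/2" "0 < n" "1 \<le> M" "1 \<le> P" "P \<le> 2" "0 \<le> C" "0 \<le> T" "0 \<le> s"
    "8*(C+1)*d/\<alpha> + T * s \<le> Q"
  shows "M*P/((\<alpha> - d)*n) * (\<alpha> + C*d) + T * s / n \<le> M*(P + Q)/n"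
proof -
  have adpos: "\<alpha> - d > 0" using assms by simp
  have sq: "4*(C+1)*d*(d/\<alpha>) \<le> 2*(C+1)*d"
  proof -
    have "d/\<alpha> \<le> 1/2" using assms by (simp add: divide_simps)
    then have "4*(C+1)*d*(d/\<alpha>) \<le> 4*(C+1)*d*(1/2)" using assms by (intro mult_left_mono) auto
    also have "4*(C+1)*d*(1/2) = 2*(C+1)*d" by simp
    finally show ?thesis .
  qed
  have "(1 + 4*(C+1)*d/\<alpha>) * (\<alpha> - d) = \<alpha> - d + 4*(C+1)*d - 4*(C+1)*d*(d/\<alpha>)"
    using assms by (simp add: field_simps)
  also have "\<dots> \<ge> \<alpha> + C*d"
  proof -
    have expand: "4*(C+1)*d = 4*d + 4*(C*d)" "2*(C+1)*d = 2*d + 2*(C*d)" by (simp_all add: algebra_simps)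
    have "0 \<le> C*d" using assms by simp
    then show ?thesis using sq assms unfolding expand by linarith
  qed
  finally have r: "(\<alpha> + C*d)/(\<alpha> - d) \<le> 1 + 4*(C+1)*d/\<alpha>" using adpos by (simp add: divide_le_eq)
  have "M*P*((\<alpha> + C*d)/(\<alpha> - d)) \<le> M*P*(1 + 4*(C+1)*d/\<alpha>)"
    using r assms by (intro mult_left_mono) auto
  also have "\<dots> = M*P + M*(P*(4*(C+1)*d/\<alpha>))" by (simp add: algebra_simps)
  also have "\<dots> \<le> M*P + M*(2*(4*(C+1)*d/\<alpha>))"
    using assms by (intro add_left_mono mult_left_mono mult_right_mono) auto
  also have "2*(4*(C+1)*d/\<alpha>) = 8*(C+1)*d/\<alpha>" by simp
  finally have factor_term: "M*P*((\<alpha> + C*d)/(\<alpha> - d)) \<le> M*P + M*(8*(C+1)*d/\<alpha>)" .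
  have error_term: "T * s \<le> M*(T * s)"
  proof -
    have "0 \<le> T * s" using assms by simp
    then have "1 * (T * s) \<le> M * (T * s)" using assms by (intro mult_right_mono) auto
    then show ?thesis by simp
  qed
  have "M*P*((\<alpha> + C*d)/(\<alpha> - d)) + T * s \<le> M*P + M*(8*(C+1)*d/\<alpha> + T * s)"
    using factor_term error_term by (simp add: algebra_simps)
  also have "\<dots> \<le> M*P + M*Q" using assms by (intro add_left_mono mult_left_mono) auto
  also have "\<dots> = M*(P + Q)" by (simp add: algebra_simps)
  finally have numerator: "M*P*((\<alpha> + C*d)/(\<alpha> - d)) + T * s \<le> M*(P + Q)" .
  have "M*P/((\<alpha> - d)*n) * (\<alpha> + C*d) + T * s / n = (M*P*((\<alpha> + C*d)/(\<alpha> - d)) + T * s) / n"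
    using assms adpos by (simp add: field_simps)
  also have "\<dots> \<le> M*(P + Q)/n" using numerator assms by (intro divide_right_mono) auto
  finally show ?thesis .
qed

text \<open>The quantitative content of Condition 1, with the big-O constants made explicit from
  some index N on.\<close>

locale concentrated_chain =
  fixes Y :: "nat \<Rightarrow> nat pmf" and \<alpha> \<epsilon> C D T :: real and \<delta> :: "nat \<Rightarrow> real" and N :: nat
  assumes support: "\<And>n. 1 \<le> n \<Longrightarrow> set_pmf (Y n) \<subseteq> {1..n}"
    and cdf_antimono: "\<And>n k. 1 \<le> n \<Longrightarrow> 1 \<le> k \<Longrightarrow>
          measure_pmf.prob (Y (Suc n)) {..k} \<le> measure_pmf.prob (Y n) {..k}"
    and alpha: "0 < \<alpha>" "\<alpha> < 1" and eps: "0 < \<epsilon>" and nonneg: "0 \<le> C" "0 \<le> D" "0 \<le> T"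
    and delta_bound: "\<And>n. N \<le> n \<Longrightarrow> \<bar>\<delta> n\<bar> \<le> D * ln (real n) powr (-1-\<epsilon>)"
    and mean_increment: "\<And>n. N \<le> n \<Longrightarrow>
          \<bar>measure_pmf.expectation (Y (Suc n)) real - measure_pmf.expectation (Y n) real - \<alpha>\<bar>
            \<le> C * \<bar>\<delta> n\<bar>"
    and concentration: "\<And>n. N \<le> n \<Longrightarrow>
          measure_pmf.prob (Y n) {j. \<bar>real j - \<alpha> * real n\<bar> > \<delta> n * real n} \<le> T * real n powr (-2-\<epsilon>)"

lemma condition1_concentrated_chain:
  assumes "condition1 Y \<alpha>"
  obtains \<epsilon> C D T \<delta> N where "concentrated_chain Y \<alpha> \<epsilon> C D T \<delta> N"
proof -
  from assms obtain \<epsilon> :: real and \<delta> :: "nat \<Rightarrow> real" where \<epsilon>: "\<epsilon> > 0"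
    and O1: "\<delta> \<in> O(\<lambda>n. ln (real n) powr (-1 - \<epsilon>))"
    and O2: "(\<lambda>n. measure_pmf.expectation (Y (n+1)) real - measure_pmf.expectation (Y n) real - \<alpha>)
               \<in> O(\<delta>)"
    and O3: "(\<lambda>n. measure_pmf.prob (Y n) {j. \<bar>real j - \<alpha> * real n\<bar> > \<delta> n * real n})
               \<in> O(\<lambda>n. real n powr (-2 - \<epsilon>))"
    unfolding condition1_def by blast
  from O1 obtain D where "0 < D"
    and D: "eventually (\<lambda>n. norm (\<delta> n) \<le> D * norm (ln (real n) powr (-1 - \<epsilon>))) at_top"
    by (elim landau_o.bigE)
  from O2 obtain C where "0 < C" and C: "eventually (\<lambda>n. norm (measure_pmf.expectation (Y (n+1)) real
        - measure_pmf.expectation (Y n) real - \<alpha>) \<le> C * norm (\<delta> n)) at_top"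
    by (elim landau_o.bigE)
  from O3 obtain T where "0 < T"
    and T: "eventually (\<lambda>n. norm (measure_pmf.prob (Y n) {j. \<bar>real j - \<alpha> * real n\<bar> > \<delta> n * real n})
           \<le> T * norm (real n powr (-2 - \<epsilon>))) at_top"
    by (elim landau_o.bigE)
  from eventually_conj[OF D eventually_conj[OF C T]] obtain N where N: "\<And>n. N \<le> n \<Longrightarrow>
      norm (\<delta> n) \<le> D * norm (ln (real n) powr (-1 - \<epsilon>)) \<and>
      norm (measure_pmf.expectation (Y (n+1)) real - measure_pmf.expectation (Y n) real - \<alpha>)
        \<le> C * norm (\<delta> n) \<and>
      norm (measure_pmf.prob (Y n) {j. \<bar>real j - \<alpha> * real n\<bar> > \<delta> n * real n})
        \<le> T * norm (real n powr (-2 - \<epsilon>))"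
    by (auto simp: eventually_at_top_linorder)
  show thesis
  proof (rule that[of \<epsilon> C D T \<delta> N], unfold_locales)
    show "\<And>n. 1 \<le> n \<Longrightarrow> set_pmf (Y n) \<subseteq> {1..n}" "0 < \<alpha>" "\<alpha> < 1"
      "\<And>n k. 1 \<le> n \<Longrightarrow> 1 \<le> k \<Longrightarrow> measure_pmf.prob (Y (Suc n)) {..k} \<le> measure_pmf.prob (Y n) {..k}"
      using assms unfolding condition1_def by auto
  qed (use \<epsilon> \<open>0 < C\<close> \<open>0 < D\<close> \<open>0 < T\<close> N in auto)
qed

context concentrated_chain
begin

lemma cdf_below_window:
  assumes "N \<le> n" "real l < (\<alpha> - \<bar>\<delta> n\<bar>) * real n"
  shows "measure_pmf.prob (Y n) {..l} \<le> T * real n powr (-2-\<epsilon>)"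
proof -
  have "{..l} \<subseteq> {j. \<bar>real j - \<alpha> * real n\<bar> > \<delta> n * real n}"
  proof
    fix j assume "j \<in> {..l}"
    then have "real j < \<alpha> * real n - \<bar>\<delta> n\<bar> * real n" using assms(2) by (simp add: algebra_simps)
    moreover have "\<delta> n * real n \<le> \<bar>\<delta> n\<bar> * real n" by (intro mult_right_mono) auto
    ultimately show "j \<in> {j. \<bar>real j - \<alpha> * real n\<bar> > \<delta> n * real n}" by simp
  qed
  then have "measure_pmf.prob (Y n) {..l}
      \<le> measure_pmf.prob (Y n) {j. \<bar>real j - \<alpha> * real n\<bar> > \<delta> n * real n}"
    by (intro measure_pmf.finite_measure_mono) auto
  with concentration[OF assms(1)] show ?thesis by linarith
qed

lemma cdf_above_window:
  assumes "N \<le> n" "(\<alpha> + \<bar>\<delta> n\<bar>) * real n \<le> real l"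
  shows "1 - measure_pmf.prob (Y n) {..l} \<le> T * real n powr (-2-\<epsilon>)"
proof -
  have "UNIV - {..l} \<subseteq> {j. \<bar>real j - \<alpha> * real n\<bar> > \<delta> n * real n}"
  proof
    fix j assume "j \<in> UNIV - {..l}"
    then have "\<alpha> * real n + \<bar>\<delta> n\<bar> * real n < real j" using assms(2) by (simp add: algebra_simps)
    moreover have "\<delta> n * real n \<le> \<bar>\<delta> n\<bar> * real n" by (intro mult_right_mono) auto
    ultimately show "j \<in> {j. \<bar>real j - \<alpha> * real n\<bar> > \<delta> n * real n}" by simp
  qed
  then have "measure_pmf.prob (Y n) (UNIV - {..l})
      \<le> measure_pmf.prob (Y n) {j. \<bar>real j - \<alpha> * real n\<bar> > \<delta> n * real n}"
    by (intro measure_pmf.finite_measure_mono) auto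
  with concentration[OF assms(1)] measure_pmf.prob_compl[of "{..l}" "Y n"] show ?thesis by simp
qed

lemma cdf_difference_sum:
  assumes "1 \<le> n"
  shows "(\<Sum>l=1..<Suc n. measure_pmf.prob (Y n) {..l} - measure_pmf.prob (Y (Suc n)) {..l})
           = measure_pmf.expectation (Y (Suc n)) real - measure_pmf.expectation (Y n) real"
  using expectation_increment[OF support support, of n real] assms by simp

text \<open>A budget function: the induction in \<open>increment_bound\<close> shows
  \<open>|\<pi>(n+1) - \<pi> n| \<le> M budget(n)/n\<close>, where \<open>budget\<close> stays in \<open>[1, 2]\<close> and increases slowly;
  its increase from \<open>shrink n\<close> to n absorbs the error terms of one step.\<close>

definition shrink :: real where "shrink = (1 + \<alpha>) / 2"

definition budget_rate :: real where
  "budget_rate = (8*(C+1)*D/\<alpha> + T) / (\<epsilon> * - ln shrink) + 1"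

definition budget :: "real \<Rightarrow> real" where
  "budget x = 2 - budget_rate * ln x powr (-\<epsilon>)"

lemma shrink: "0 < shrink" "shrink < 1" "\<alpha> < shrink"
  using alpha by (auto simp: shrink_def)

lemma shrink_log_pos: "0 < \<epsilon> * - ln shrink"
  using eps shrink by (simp add: mult_pos_neg)

lemma budget_rate_pos: "0 < budget_rate"
proof -
  have "0 \<le> (8*(C+1)*D/\<alpha> + T) / (\<epsilon> * - ln shrink)"
    using shrink_log_pos alpha nonneg by (intro divide_nonneg_pos) auto
  then show ?thesis by (simp add: budget_rate_def)
qed

lemma budget_rate_dominates: "8*(C+1)*D/\<alpha> + T \<le> budget_rate * (\<epsilon> * - ln shrink)"
proof -
  define K where "K = 8*(C+1)*D/\<alpha> + T"
  define y where "y = \<epsilon> * - ln shrink"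
  have "0 < y" using shrink_log_pos by (simp add: y_def)
  then have "budget_rate * y = K + y"
    unfolding budget_rate_def K_def[symmetric] y_def[symmetric] by (simp add: field_simps)
  then show ?thesis using \<open>0 < y\<close> unfolding K_def y_def by linarith
qed

lemma budget_range:
  obtains X where "3 \<le> X" "\<And>x. X \<le> x \<Longrightarrow> 1 \<le> budget x \<and> budget x \<le> 2"
proof -
  have "((\<lambda>x. budget_rate * ln x powr (-\<epsilon>)) \<longlongrightarrow> 0) at_top" using eps by real_asymp
  then have "eventually (\<lambda>x. budget_rate * ln x powr (-\<epsilon>) < 1) at_top"
    by (rule order_tendstoD) simp
  then have "eventually (\<lambda>x. budget_rate * ln x powr (-\<epsilon>) < 1 \<and> 3 \<le> x) at_top"
    by (intro eventually_conj eventually_ge_at_top)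
  then obtain X where X: "\<And>x. X \<le> x \<Longrightarrow> budget_rate * ln x powr (-\<epsilon>) < 1 \<and> 3 \<le> x"
    by (auto simp: eventually_at_top_linorder)
  show thesis
  proof (rule that[of X])
    fix x assume "X \<le> x"
    then show "1 \<le> budget x \<and> budget x \<le> 2"
      using X[of x] budget_rate_pos by (simp add: budget_def less_imp_le)
  qed (use X[of X] in simp)
qed

lemma budget_mono:
  assumes "3 \<le> x" "x \<le> y"
  shows "budget x \<le> budget y"
proof -
  have "ln y powr (-\<epsilon>) \<le> ln x powr (-\<epsilon>)"
    using assms eps by (intro powr_mono2') auto
  then show ?thesis using budget_rate_pos by (simp add: budget_def)
qed

definition large_index :: "nat \<Rightarrow> bool" where
  "large_index n \<longleftrightarrow> N \<le> n \<and> D * ln (real n) powr (-1-\<epsilon>) \<le> \<alpha>/2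
     \<and> D * ln (real n + 1) powr (-1-\<epsilon>) \<le> (1-\<alpha>)/4
     \<and> (\<alpha> + (1-\<alpha>)/4) * (real n + 1) \<le> shrink * real n
     \<and> real n powr (-\<epsilon>) \<le> ln (real n) powr (-1-\<epsilon>)
     \<and> - ln shrink < ln (real n) \<and> shrink * real n \<le> real n - 1"

lemma eventually_large_index: "eventually large_index sequentially"
proof -
  have e1: "eventually (\<lambda>n. D * ln (real n) powr (-1-\<epsilon>) \<le> \<alpha>/2) sequentially"
    by (rule eventually_le_of_tendsto_zero) (use eps alpha in real_asymp, use alpha in simp)
  have e2: "eventually (\<lambda>n. D * ln (real n + 1) powr (-1-\<epsilon>) \<le> (1-\<alpha>)/4) sequentially"
    by (rule eventually_le_of_tendsto_zero) (use eps alpha in real_asymp, use alpha in simp)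
  have e3: "eventually (\<lambda>n. (\<alpha> + (1-\<alpha>)/4) * (real n + 1) \<le> shrink * real n) sequentially"
    using eventually_real_ge[of "(\<alpha> + (1-\<alpha>)/4) / ((1-\<alpha>)/4)"]
    by (rule eventually_mono) (use alpha in \<open>simp add: shrink_def field_simps\<close>)
  have e4: "eventually (\<lambda>n::nat. real n powr (-\<epsilon>) \<le> ln (real n) powr (-1-\<epsilon>)) sequentially"
    using eps by real_asymp
  have e5: "eventually (\<lambda>n::nat. - ln shrink < ln (real n)) sequentially" by real_asymp
  have e6: "eventually (\<lambda>n. shrink * real n \<le> real n - 1) sequentially"
    using eventually_real_ge[of "1 / (1 - shrink)"]
    by (rule eventually_mono) (use shrink in \<open>simp add: field_simps\<close>)
  show ?thesis unfolding large_index_def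
    using eventually_ge_at_top[of N] e1 e2 e3 e4 e5 e6 by (intro eventually_conj)
qed

text \<open>The budget gained between \<open>h \<le> shrink n\<close> and n dominates the errors
  \<open>O(|\<delta> n|)\<close> and \<open>O(n\<^sup>-\<^sup>\<epsilon>)\<close>, both of order \<open>(log n)\<^sup>-\<^sup>1\<^sup>-\<^sup>\<epsilon>\<close>.\<close>

lemma budget_gain:
  assumes n: "large_index n" and h: "3 \<le> h" "h \<le> shrink * real n"
  shows "8*(C+1)*\<bar>\<delta> n\<bar>/\<alpha> + T * real n powr (-\<epsilon>) \<le> budget (real n) - budget h"
proof -
  define L where "L = - ln shrink"
  define u where "u = ln (real n) - L"
  have L: "0 < L" using shrink by (simp add: L_def)
  have u: "0 < u" using n by (simp add: large_index_def u_def L_def)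
  have "0 < shrink * real n" using h by linarith
  then have npos: "0 < real n" using shrink by (simp add: zero_less_mult_iff)
  have "ln h \<le> ln (shrink * real n)" using h by simp
  also have "\<dots> = u" using shrink npos by (simp add: ln_mult u_def L_def)
  finally have "u powr (-\<epsilon>) \<le> ln h powr (-\<epsilon>)"
    using h eps by (intro powr_mono2') auto
  moreover have "\<epsilon> * L * ln (real n) powr (-1-\<epsilon>) \<le> u powr (-\<epsilon>) - ln (real n) powr (-\<epsilon>)"
    using powr_neg_decrement[OF u L eps] by (simp add: u_def)
  ultimately have gain: "\<epsilon> * L * ln (real n) powr (-1-\<epsilon>) \<le> ln h powr (-\<epsilon>) - ln (real n) powr (-\<epsilon>)"
    by linarith
  have "8*(C+1)*\<bar>\<delta> n\<bar>/\<alpha> \<le> 8*(C+1)/\<alpha> * (D * ln (real n) powr (-1-\<epsilon>))"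
    using n delta_bound nonneg alpha
    by (simp add: large_index_def mult_left_mono divide_right_mono)
  moreover have "T * real n powr (-\<epsilon>) \<le> T * ln (real n) powr (-1-\<epsilon>)"
    using n nonneg by (intro mult_left_mono) (auto simp: large_index_def)
  ultimately have "8*(C+1)*\<bar>\<delta> n\<bar>/\<alpha> + T * real n powr (-\<epsilon>)
      \<le> (8*(C+1)*D/\<alpha> + T) * ln (real n) powr (-1-\<epsilon>)"
    by (simp add: algebra_simps)
  also have "\<dots> \<le> budget_rate * (\<epsilon> * L) * ln (real n) powr (-1-\<epsilon>)"
    using budget_rate_dominates by (intro mult_right_mono) (auto simp: L_def)
  also have "\<dots> \<le> budget_rate * (ln h powr (-\<epsilon>) - ln (real n) powr (-\<epsilon>))"
    using gain budget_rate_pos by (simp add: mult_left_mono)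
  also have "\<dots> = budget (real n) - budget h" by (simp add: budget_def algebra_simps)
  finally show ?thesis .
qed

end

locale harmonic_on_chain = concentrated_chain +
  fixes \<pi> :: "nat \<Rightarrow> real" and a :: nat
  assumes pi_range: "\<And>n. 0 \<le> \<pi> n \<and> \<pi> n \<le> 1"
    and harmonic: "\<And>n. a < n \<Longrightarrow> \<pi> n = measure_pmf.expectation (Y n) \<pi>"
begin

lemma pi_diff_le_1: "\<bar>\<pi> j - \<pi> m\<bar> \<le> 1"
  using pi_range[of j] pi_range[of m] by linarith

text \<open>By Abel summation, \<open>\<pi>(n+1) - \<pi> n\<close> is an average of increments \<open>\<pi>(l+1) - \<pi> l\<close> with
  nonnegative weights of total mass about \<alpha>, concentrated on the window
  \<open>(\<alpha> \<plusminus> |\<delta>|) n\<close>; hence it is bounded by the increments inside the window up to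
  a factor \<open>\<alpha> + C |\<delta> n|\<close> and an error \<open>T n\<^sup>-\<^sup>\<epsilon>/n\<close>.\<close>

lemma increment_window_bound:
  assumes n: "N \<le> n" "a < n" and "0 \<le> b"
    and window: "\<And>l. (\<alpha> - \<bar>\<delta> n\<bar>) * real n \<le> real l \<Longrightarrow>
                   real l < (\<alpha> + \<bar>\<delta> (Suc n)\<bar>) * real (Suc n) \<Longrightarrow> \<bar>\<pi> (Suc l) - \<pi> l\<bar> \<le> b"
  shows "\<bar>\<pi> (Suc n) - \<pi> n\<bar> \<le> b * (\<alpha> + C * \<bar>\<delta> n\<bar>) + T * real n powr (-\<epsilon>) / real n"
proof -
  define w where "w l = measure_pmf.prob (Y n) {..l} - measure_pmf.prob (Y (Suc n)) {..l}" for l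
  define t where "t = T * real n powr (-2-\<epsilon>)"
  have n1: "1 \<le> n" and npos: "0 < real n" using n by auto
  have expansion: "\<pi> (Suc n) - \<pi> n = (\<Sum>l=1..<Suc n. w l * (\<pi> (Suc l) - \<pi> l))"
    using harmonic[of n] harmonic[of "Suc n"] n expectation_increment[OF support support, of n \<pi>]
    by (simp add: w_def)
  have mass: "(\<Sum>l=1..<Suc n. w l) \<le> \<alpha> + C * \<bar>\<delta> n\<bar>"
    using cdf_difference_sum[OF n1] mean_increment[OF n(1)] unfolding w_def by linarith
  have "\<bar>\<Sum>l\<in>{1..<Suc n}. w l * (\<pi> (Suc l) - \<pi> l)\<bar>
          \<le> b * (\<Sum>l\<in>{1..<Suc n}. w l) + real (card {1..<Suc n}) * t"
  proof (rule weighted_sum_bound[where W = "{l. (\<alpha> - \<bar>\<delta> n\<bar>) * real n \<le> real l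
                                            \<and> real l < (\<alpha> + \<bar>\<delta> (Suc n)\<bar>) * real (Suc n)}"])
    fix l assume l: "l \<in> {1..<Suc n}"
    show "0 \<le> w l" using cdf_antimono[OF n1, of l] l by (simp add: w_def)
    show "\<bar>\<pi> (Suc l) - \<pi> l\<bar> \<le> 1" by (rule pi_diff_le_1)
    show "\<bar>\<pi> (Suc l) - \<pi> l\<bar> \<le> b" if "l \<in> {l. (\<alpha> - \<bar>\<delta> n\<bar>) * real n \<le> real l
        \<and> real l < (\<alpha> + \<bar>\<delta> (Suc n)\<bar>) * real (Suc n)}"
      using window that by blast
    show "w l \<le> t" if outside: "l \<notin> {l. (\<alpha> - \<bar>\<delta> n\<bar>) * real n \<le> real l
        \<and> real l < (\<alpha> + \<bar>\<delta> (Suc n)\<bar>) * real (Suc n)}"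
    proof (cases "real l < (\<alpha> - \<bar>\<delta> n\<bar>) * real n")
      case True
      have "0 \<le> measure_pmf.prob (Y (Suc n)) {..l}" by (rule measure_nonneg)
      with cdf_below_window[OF n(1) True] show ?thesis unfolding w_def t_def by linarith
    next
      case False
      with outside have "(\<alpha> + \<bar>\<delta> (Suc n)\<bar>) * real (Suc n) \<le> real l" by auto
      then have "1 - measure_pmf.prob (Y (Suc n)) {..l} \<le> T * real (Suc n) powr (-2-\<epsilon>)"
        using n by (intro cdf_above_window) auto
      also have "\<dots> \<le> t" unfolding t_def using npos eps nonneg
        by (intro mult_left_mono powr_mono2') auto
      moreover have "measure_pmf.prob (Y n) {..l} \<le> 1" by (rule measure_pmf.prob_le_1)
      ultimately show ?thesis unfolding w_def by linarith
    qed
  qed (use \<open>0 \<le> b\<close> nonneg in \<open>auto simp: t_def\<close>)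
  moreover have "b * (\<Sum>l\<in>{1..<Suc n}. w l) \<le> b * (\<alpha> + C * \<bar>\<delta> n\<bar>)"
    using mass \<open>0 \<le> b\<close> by (intro mult_left_mono) auto
  moreover have "real (card {1..<Suc n}) * t = T * real n powr (-\<epsilon>) / real n"
  proof -
    have "real (card {1..<Suc n}) * t = T * (real n * real n powr (-2-\<epsilon>))"
      unfolding t_def by (simp add: mult.left_commute)
    then show ?thesis by (simp add: powr_minus_two[OF npos])
  qed
  ultimately show ?thesis unfolding expansion by linarith
qed

text \<open>Induction step for \<open>|\<pi>(n+1) - \<pi> n| \<le> M budget(n)/n\<close>: the window lies in
  \<open>[\<alpha> n/2, shrink n]\<close>, below n, where the claim holds by induction; the growth of the budget
  from \<open>shrink n\<close> to n pays for the factor and the error in \<open>increment_window_bound\<close>.\<close>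

lemma increment_step:
  assumes n: "large_index n" "a < n" and X: "3 \<le> X" "X \<le> \<alpha> * real n / 2"
    and budget_X: "\<And>x. X \<le> x \<Longrightarrow> 1 \<le> budget x \<and> budget x \<le> 2" and M: "1 \<le> M"
    and IH: "\<And>l. l < n \<Longrightarrow> X \<le> real l \<Longrightarrow> \<bar>\<pi> (Suc l) - \<pi> l\<bar> \<le> M * budget (real l) / real l"
  shows "\<bar>\<pi> (Suc n) - \<pi> n\<bar> \<le> M * budget (real n) / real n"
proof -
  define d where "d = \<bar>\<delta> n\<bar>"
  define lo where "lo = (\<alpha> - d) * real n"
  define hi where "hi = (\<alpha> + \<bar>\<delta> (Suc n)\<bar>) * real (Suc n)"
  have nN: "N \<le> n" and npos: "0 < real n" using n by (auto simp: large_index_def)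
  have d: "0 \<le> d" "d \<le> \<alpha>/2" using n delta_bound[OF nN] by (auto simp: large_index_def d_def)
  have dS: "\<bar>\<delta> (Suc n)\<bar> \<le> (1-\<alpha>)/4"
    using n delta_bound[of "Suc n"] nN by (auto simp: large_index_def add.commute)
  have "\<alpha> * real n / 2 = (\<alpha> - \<alpha>/2) * real n" by simp
  also have "\<dots> \<le> lo" unfolding lo_def using d npos by (intro mult_right_mono) auto
  finally have "\<alpha> * real n / 2 \<le> lo" .
  then have X_lo: "X \<le> lo" using X by linarith
  have "lo \<le> \<alpha> * real n" unfolding lo_def using d npos by (simp add: algebra_simps)
  also have "\<dots> \<le> hi" unfolding hi_def using alpha by (intro mult_mono) auto
  finally have lo_hi: "lo \<le> hi" .
  have "hi = (\<alpha> + \<bar>\<delta> (Suc n)\<bar>) * (real n + 1)" by (simp add: hi_def)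
  also have "\<dots> \<le> (\<alpha> + (1-\<alpha>)/4) * (real n + 1)" using dS by (intro mult_right_mono) auto
  finally have "hi \<le> (\<alpha> + (1-\<alpha>)/4) * (real n + 1)" .
  then have hi: "hi \<le> shrink * real n" "hi \<le> real n - 1" using n by (auto simp: large_index_def)
  define P where "P = budget hi"
  have P: "1 \<le> P" "P \<le> 2" using budget_X[of hi] X_lo lo_hi by (auto simp: P_def)
  have "\<bar>\<pi> (Suc l) - \<pi> l\<bar> \<le> M * P / lo" if l: "lo \<le> real l" "real l < hi" for l
  proof -
    have Xl: "X \<le> real l" using X_lo l by linarith
    have "real l < real n" using l hi by linarith
    then have "\<bar>\<pi> (Suc l) - \<pi> l\<bar> \<le> M * budget (real l) / real l" using IH Xl by simp
    also have "\<dots> \<le> M * P / lo"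
    proof (rule frac_le)
      have "budget (real l) \<le> P" unfolding P_def using X Xl l(2) by (intro budget_mono) auto
      then show "M * budget (real l) \<le> M * P" using M by (intro mult_left_mono) auto
      show "0 \<le> M * P" using M P by simp
      show "0 < lo" "lo \<le> real l" using X X_lo l(1) by auto
    qed
    finally show ?thesis .
  qed
  then have "\<bar>\<pi> (Suc n) - \<pi> n\<bar> \<le> M * P / lo * (\<alpha> + C * d) + T * real n powr (-\<epsilon>) / real n"
    using increment_window_bound[OF nN n(2), of "M * P / lo"] X X_lo M P
    by (simp add: d_def lo_def hi_def)
  also have "\<dots> \<le> M * (P + (budget (real n) - P)) / real n"
  proof -
    have "3 \<le> hi" using X X_lo lo_hi by linarith
    then have gain: "8*(C+1)*d/\<alpha> + T * real n powr (-\<epsilon>) \<le> budget (real n) - P"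
      unfolding P_def d_def using budget_gain[OF n(1) _ hi(1)] by blast
    show ?thesis unfolding lo_def
      using window_recursion_arith[OF alpha(1) d npos M P nonneg(1) nonneg(3) _ gain] by simp
  qed
  finally show ?thesis by simp
qed

lemma increment_bound:
  obtains X K where "0 < X" "0 \<le> K" "\<And>l. X \<le> real l \<Longrightarrow> \<bar>\<pi> (Suc l) - \<pi> l\<bar> \<le> K / real l"
proof -
  obtain X where X: "3 \<le> X" and budget_X: "\<And>x. X \<le> x \<Longrightarrow> 1 \<le> budget x \<and> budget x \<le> 2"
    using budget_range by blast
  have "eventually (\<lambda>n. large_index n \<and> X \<le> \<alpha> * real n / 2 \<and> a < n) sequentially"
    using eventually_large_index eventually_real_ge[of "2 * X / \<alpha>"] eventually_gt_at_top[of a]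
  proof eventually_elim
    case (elim n)
    then show ?case using alpha by (simp add: field_simps)
  qed
  then obtain N0 where N0: "\<And>n. N0 \<le> n \<Longrightarrow> large_index n \<and> X \<le> \<alpha> * real n / 2 \<and> a < n"
    by (auto simp: eventually_at_top_linorder)
  define M where "M = real N0 + 1"
  have claim: "X \<le> real n \<longrightarrow> \<bar>\<pi> (Suc n) - \<pi> n\<bar> \<le> M * budget (real n) / real n" for n
  proof (induction n rule: less_induct)
    case (less n)
    show ?case
    proof
      assume Xn: "X \<le> real n"
      show "\<bar>\<pi> (Suc n) - \<pi> n\<bar> \<le> M * budget (real n) / real n"
      proof (cases "n < N0")
        case True
        then have "1 \<le> M / real n" using X Xn by (simp add: M_def field_simps)
        also have "\<dots> \<le> M * budget (real n) / real n"
          using budget_X[OF Xn] X Xn by (intro divide_right_mono) (auto simp: M_def)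
        finally show ?thesis using pi_diff_le_1[of "Suc n" n] by linarith
      next
        case False
        then have "large_index n" "a < n" "X \<le> \<alpha> * real n / 2" using N0[of n] by auto
        then show ?thesis
          by (rule increment_step[OF _ _ X _ budget_X]) (use less.IH in \<open>auto simp: M_def\<close>)
      qed
    qed
  qed
  show thesis
  proof (rule that[of X "2 * M"])
    fix l assume Xl: "X \<le> real l"
    have "\<bar>\<pi> (Suc l) - \<pi> l\<bar> \<le> M * budget (real l) / real l" using claim Xl by blast
    also have "\<dots> \<le> 2 * M / real l"
    proof (rule divide_right_mono)
      show "M * budget (real l) \<le> 2 * M"
        using budget_X[OF Xl] mult_left_mono[of "budget (real l)" 2 M] by (simp add: M_def mult.commute)
    qed simp
    finally show "\<bar>\<pi> (Suc l) - \<pi> l\<bar> \<le> 2 * M / real l" .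
  qed (use X in \<open>auto simp: M_def\<close>)
qed

text \<open>Slow variation along the scaling \<open>n \<mapsto> \<alpha> n\<close>: by harmonicity \<open>\<pi> n = E \<pi>(Y n)\<close>, and
  \<open>Y n\<close> lies within \<open>|\<delta> n| n\<close> of \<open>\<alpha> n\<close> except with probability \<open>T n\<^sup>-\<^sup>2\<^sup>-\<^sup>\<epsilon>\<close>; so the
  relative Lipschitz bound gives \<open>|\<pi> n - \<pi> m| = O((log n)\<^sup>-\<^sup>1\<^sup>-\<^sup>\<epsilon>)\<close> for \<open>m \<approx> \<alpha> n\<close>.\<close>

lemma slow_variation:
  assumes X: "0 < X" and K: "0 \<le> K"
    and Lip: "\<And>j m. X \<le> real j \<Longrightarrow> X \<le> real m \<Longrightarrow>
               \<bar>\<pi> j - \<pi> m\<bar> \<le> K * \<bar>real j - real m\<bar> / min (real j) (real m)"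
  obtains H N1 where "0 \<le> H" "\<And>n m. N1 \<le> n \<Longrightarrow> \<bar>real m - \<alpha> * real n\<bar> \<le> 2 \<Longrightarrow>
            \<bar>\<pi> n - \<pi> m\<bar> \<le> H * ln (real n) powr (-1-\<epsilon>)"
proof -
  define H where "H = 2 * K / \<alpha> * (D + 2) + T"
  have e1: "eventually (\<lambda>n. D * ln (real n) powr (-1-\<epsilon>) \<le> \<alpha>/4) sequentially"
    by (rule eventually_le_of_tendsto_zero) (use eps alpha in real_asymp, use alpha in simp)
  have e2: "eventually (\<lambda>n::nat. 1 / real n \<le> ln (real n) powr (-1-\<epsilon>)) sequentially"
    using eps by real_asymp
  have e3: "eventually (\<lambda>n::nat. real n powr (-2-\<epsilon>) \<le> ln (real n) powr (-1-\<epsilon>)) sequentially"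
    using eps by real_asymp
  have "eventually (\<lambda>n. D * ln (real n) powr (-1-\<epsilon>) \<le> \<alpha>/4
     \<and> 2 * max X 4 / \<alpha> \<le> real n \<and> 1 / real n \<le> ln (real n) powr (-1-\<epsilon>)
     \<and> real n powr (-2-\<epsilon>) \<le> ln (real n) powr (-1-\<epsilon>) \<and> N + a + 1 \<le> n) sequentially"
    using e1 eventually_real_ge e2 e3 eventually_ge_at_top by (intro eventually_conj)
  then obtain N1 where N1: "\<And>n. N1 \<le> n \<Longrightarrow> D * ln (real n) powr (-1-\<epsilon>) \<le> \<alpha>/4
     \<and> 2 * max X 4 / \<alpha> \<le> real n \<and> 1 / real n \<le> ln (real n) powr (-1-\<epsilon>)
     \<and> real n powr (-2-\<epsilon>) \<le> ln (real n) powr (-1-\<epsilon>) \<and> N + a + 1 \<le> n"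
    by (auto simp: eventually_at_top_linorder)
  have "\<bar>\<pi> n - \<pi> m\<bar> \<le> H * ln (real n) powr (-1-\<epsilon>)"
    if n: "N1 \<le> n" and m: "\<bar>real m - \<alpha> * real n\<bar> \<le> 2" for n m
  proof -
    note large = N1[OF n]
    have nN: "N \<le> n" and na: "a < n" and npos: "0 < real n" using large by auto
    have half: "max X 4 \<le> \<alpha> * real n / 2" using large alpha by (simp add: field_simps)
    define d where "d = \<bar>\<delta> n\<bar>"
    have dD: "d \<le> D * ln (real n) powr (-1-\<epsilon>)" using delta_bound[OF nN] by (simp add: d_def)
    define Bad where "Bad = {j. \<bar>real j - \<alpha> * real n\<bar> > \<delta> n * real n}"
    define b where "b = K * (d * real n + 2) / (\<alpha> * real n / 2)"
    have b0: "0 \<le> b" using K npos alpha by (simp add: b_def d_def)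
    have good: "\<bar>\<pi> j - \<pi> m\<bar> \<le> b" if "j \<notin> Bad" for j
    proof -
      have "\<bar>real j - \<alpha> * real n\<bar> \<le> d * real n"
        using that npos by (smt (verit, best) Bad_def abs_ge_self d_def mem_Collect_eq mult_right_mono of_nat_0_le_iff)
      moreover have "d * real n \<le> \<alpha> / 4 * real n" using dD large npos by (intro mult_right_mono) auto
      ultimately have jm: "\<alpha> * real n / 2 \<le> min (real j) (real m)" "\<bar>real j - real m\<bar> \<le> d * real n + 2"
        using m half by (auto simp: abs_le_iff)
      have "X \<le> real j" "X \<le> real m" using jm half by auto
      then have "\<bar>\<pi> j - \<pi> m\<bar> \<le> K * \<bar>real j - real m\<bar> / min (real j) (real m)"
        by (rule Lip)
      also have "\<dots> \<le> b" unfolding b_def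
        using jm K alpha npos d_def by (intro frac_le mult_left_mono) auto
      finally show ?thesis .
    qed
    have "\<bar>\<pi> j - \<pi> m\<bar> \<le> b + indicator Bad j" for j
      using good[of j] pi_diff_le_1[of j m] b0 by (cases "j \<in> Bad") auto
    then have "\<bar>\<pi> n - \<pi> m\<bar> \<le> b + measure_pmf.prob (Y n) Bad"
      unfolding harmonic[OF na] using pi_range b0
      by (intro expectation_deviation_bound[where G=1]) (auto simp: abs_le_iff)
    also have "\<dots> \<le> H * ln (real n) powr (-1-\<epsilon>)"
    proof -
      have "b = 2 * K / \<alpha> * (d + 2 / real n)" using npos alpha by (simp add: b_def field_simps)
      also have "\<dots> \<le> 2 * K / \<alpha> * (D * ln (real n) powr (-1-\<epsilon>) + 2 * ln (real n) powr (-1-\<epsilon>))"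
        using dD large K alpha by (intro mult_left_mono add_mono) auto
      also have "\<dots> = 2 * K / \<alpha> * (D + 2) * ln (real n) powr (-1-\<epsilon>)"
        by (simp add: algebra_simps add_divide_distrib)
      finally have "b \<le> 2 * K / \<alpha> * (D + 2) * ln (real n) powr (-1-\<epsilon>)" .
      moreover have "measure_pmf.prob (Y n) Bad \<le> T * ln (real n) powr (-1-\<epsilon>)"
        using concentration[OF nN] large nonneg unfolding Bad_def
        by (meson mult_left_mono order_trans)
      ultimately show ?thesis by (simp add: H_def algebra_simps)
    qed
    finally show ?thesis .
  qed
  then show thesis using that[of H N1] K alpha nonneg by (simp add: H_def)
qed

end

text \<open>Along the geometric
  orbit \<open>t, t/\<alpha>, t/\<alpha>\<^sup>2, \<dots>\<close> the increments of f are summable (bounded by the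
  telescoping differences of \<open>tail\<close>), so \<open>\<psi>(t) = lim f(\<lfloor>t/\<alpha>\<^sup>k\<rfloor>)\<close> exists, differs from
  \<open>f(\<lfloor>t\<rfloor>)\<close> by at most \<open>tail t \<rightarrow> 0\<close>, and is invariant under \<open>t \<mapsto> \<alpha> t\<close>.\<close>

locale slowly_varying =
  fixes f :: "nat \<Rightarrow> real" and \<alpha> e H :: real and N1 :: nat
  assumes alpha: "0 < \<alpha>" "\<alpha> < 1" and e: "0 < e" and H: "0 \<le> H"
    and slow: "\<And>n m. N1 \<le> n \<Longrightarrow> \<bar>real m - \<alpha> * real n\<bar> \<le> 2 \<Longrightarrow>
                 \<bar>f n - f m\<bar> \<le> H * ln (real n) powr (-1-e)"
begin

definition scaled :: "real \<Rightarrow> nat \<Rightarrow> real" where "scaled t k = t / \<alpha> ^ k"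

definition scaled_index :: "real \<Rightarrow> nat \<Rightarrow> nat" where "scaled_index t k = nat \<lfloor>scaled t k\<rfloor>"

definition tail :: "real \<Rightarrow> real" where "tail x = H / (e * - ln \<alpha>) * ln (x / 2) powr (-e)"

definition threshold :: real where "threshold = max 4 (real N1 + 1)"

definition psi :: "real \<Rightarrow> real" where "psi t = lim (\<lambda>k. f (scaled_index t k))"

lemma scaled_Suc: "scaled t (Suc k) = scaled t k / \<alpha>"
  by (simp add: scaled_def)

lemma scaled_pos: "0 < t \<Longrightarrow> 0 < scaled t k"
  using alpha by (simp add: scaled_def)

lemma scaled_mono: "0 < t \<Longrightarrow> k \<le> j \<Longrightarrow> scaled t k \<le> scaled t j"
  using alpha by (simp add: scaled_def divide_left_mono power_decreasing)

lemma scaled_index_bounds: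
  "0 < t \<Longrightarrow> real (scaled_index t k) \<le> scaled t k \<and> scaled t k < real (scaled_index t k) + 1"
  using scaled_pos[of t k] by (simp add: scaled_index_def)

lemma tail_nonneg: "0 \<le> tail x"
proof -
  have "0 < e * - ln \<alpha>" using alpha e by (intro mult_pos_pos) auto
  then show ?thesis unfolding tail_def by (rule mult_nonneg_nonneg[OF divide_nonneg_pos[OF H]]) simp
qed

lemma tail_tendsto: "(tail \<longlongrightarrow> 0) at_top"
  unfolding tail_def using e by real_asymp

text \<open>One step along the orbit: consecutive indices satisfy \<open>|m - \<alpha> n| \<le> 2\<close>, and
  \<open>powr_neg_decrement\<close> turns the slow-variation bound into a difference of \<open>tail\<close>.\<close>

lemma orbit_step:
  assumes t: "0 < t" and large: "threshold \<le> scaled t k"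
  shows "\<bar>f (scaled_index t (Suc k)) - f (scaled_index t k)\<bar> \<le> tail (scaled t k) - tail (scaled t (Suc k))"
proof -
  define x where "x = scaled t k"
  define y where "y = scaled t (Suc k)"
  define n where "n = scaled_index t (Suc k)"
  define L where "L = - ln \<alpha>"
  have y: "y = x / \<alpha>" and xy: "x \<le> y" and x4: "4 \<le> x"
    using scaled_Suc scaled_mono[OF t, of k "Suc k"] large by (auto simp: x_def y_def threshold_def)
  have n: "real n \<le> y" "y < real n + 1"
    using scaled_index_bounds[OF t] by (auto simp: y_def n_def)
  have m: "real (scaled_index t k) \<le> x" "x < real (scaled_index t k) + 1"
    using scaled_index_bounds[OF t] by (auto simp: x_def)
  have "N1 \<le> n" using n xy large by (simp add: x_def threshold_def)
  moreover have "\<bar>real (scaled_index t k) - \<alpha> * real n\<bar> \<le> 2"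
  proof -
    have "\<alpha> * real n \<le> x" "x < \<alpha> * real n + \<alpha>"
      using n alpha y mult_left_mono[of "real n" y \<alpha>] mult_strict_left_mono[of y "real n + 1" \<alpha>]
      by (auto simp: field_simps)
    then show ?thesis using m alpha by (simp add: abs_le_iff)
  qed
  ultimately have "\<bar>f n - f (scaled_index t k)\<bar> \<le> H * ln (real n) powr (-1-e)" by (rule slow)
  define u where "u = ln (x / 2)"
  have u: "0 < u" and L: "0 < L" using x4 alpha by (simp_all add: u_def L_def)
  have lny: "ln (y / 2) = u + L"
    using x4 alpha by (simp add: u_def L_def y ln_div ln_mult)
  have "y / 2 \<le> real n" using n xy x4 by linarith
  then have "ln (y / 2) \<le> ln (real n)" using x4 xy by (subst ln_le_cancel_iff) auto
  then have "ln (real n) powr (-1-e) \<le> (u + L) powr (-1-e)"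
    using lny u L e by (intro powr_mono2') auto
  then have "\<bar>f n - f (scaled_index t k)\<bar> \<le> H / (e * L) * (e * L * (u + L) powr (-1-e))"
    using \<open>\<bar>f n - f (scaled_index t k)\<bar> \<le> _\<close> H e L by (simp add: mult_left_mono order_trans)
  also have "\<dots> \<le> H / (e * L) * (u powr (-e) - (u + L) powr (-e))"
    using powr_neg_decrement[OF u L e] H e L by (intro mult_left_mono) auto
  also have "\<dots> = tail x - tail y" by (simp add: tail_def u_def lny L_def algebra_simps)
  finally show ?thesis by (simp add: x_def y_def n_def)
qed

lemma orbit_telescope:
  assumes t: "0 < t" and large: "threshold \<le> scaled t q"
  shows "\<bar>f (scaled_index t (q + j)) - f (scaled_index t q)\<bar> \<le> tail (scaled t q) - tail (scaled t (q + j))"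
proof (induction j)
  case 0 then show ?case by simp
next
  case (Suc j)
  have "threshold \<le> scaled t (q + j)" using large scaled_mono[OF t, of q "q + j"] by linarith
  from orbit_step[OF t this] Suc show ?case by simp
qed

lemma orbit_converges:
  assumes t: "0 < t"
  shows "(\<lambda>k. f (scaled_index t k)) \<longlonglongrightarrow> psi t"
proof -
  have "Cauchy (\<lambda>k. f (scaled_index t k))"
  proof (rule CauchyI)
    fix r :: real assume "0 < r"
    with tail_tendsto have "eventually (\<lambda>x. tail x < r / 2) at_top"
      by (intro order_tendstoD) auto
    then obtain B where B: "\<And>x. x \<ge> B \<Longrightarrow> tail x < r / 2" by (auto simp: eventually_at_top_linorder)
    have "eventually (\<lambda>k. max threshold B \<le> scaled t k) sequentially"
      unfolding scaled_def using eventually_div_power_ge[OF alpha t] by blast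
    then obtain q where q: "\<And>k. k \<ge> q \<Longrightarrow> max threshold B \<le> scaled t k"
      by (auto simp: eventually_at_top_linorder)
    have close: "\<bar>f (scaled_index t p) - f (scaled_index t q)\<bar> < r / 2" if "q \<le> p" for p
    proof -
      obtain j where p: "p = q + j" using \<open>q \<le> p\<close> le_Suc_ex by blast
      have "\<bar>f (scaled_index t p) - f (scaled_index t q)\<bar> \<le> tail (scaled t q) - tail (scaled t p)"
        using orbit_telescope[OF t, of q j] q[of q] by (simp add: p)
      then show ?thesis using tail_nonneg[of "scaled t p"] q[of q] B by fastforce
    qed
    show "\<exists>M. \<forall>m\<ge>M. \<forall>n\<ge>M. norm (f (scaled_index t m) - f (scaled_index t n)) < r"
    proof (intro exI allI impI)
      fix m n assume "q \<le> m" "q \<le> n"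
      from close[OF this(1)] close[OF this(2)]
      show "norm (f (scaled_index t m) - f (scaled_index t n)) < r" by (simp only: real_norm_def)
    qed
  qed
  then have "convergent (\<lambda>k. f (scaled_index t k))" by (rule Cauchy_convergent)
  then show ?thesis unfolding psi_def by (simp add: convergent_LIMSEQ_iff)
qed

lemma psi_approx:
  assumes t: "threshold \<le> t"
  shows "\<bar>f (scaled_index t 0) - psi t\<bar> \<le> tail t"
proof -
  have tp: "0 < t" using t by (simp add: threshold_def)
  have "\<bar>f (scaled_index t j) - f (scaled_index t 0)\<bar> \<le> tail t" for j
    using orbit_telescope[OF tp, of 0 j] t tail_nonneg[of "scaled t j"] by (simp add: scaled_def)
  moreover have "(\<lambda>j. \<bar>f (scaled_index t j) - f (scaled_index t 0)\<bar>) \<longlonglongrightarrow> \<bar>psi t - f (scaled_index t 0)\<bar>"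
    by (intro tendsto_intros orbit_converges[OF tp])
  ultimately have "\<bar>psi t - f (scaled_index t 0)\<bar> \<le> tail t" by (intro LIMSEQ_le_const2) auto
  then show ?thesis by (simp add: abs_minus_commute)
qed

lemma f_minus_psi_tendsto: "(\<lambda>n. f n - psi (real n)) \<longlonglongrightarrow> 0"
proof (rule Lim_null_comparison)
  show "eventually (\<lambda>n. norm (f n - psi (real n)) \<le> tail (real n)) sequentially"
    using eventually_real_ge[of threshold]
  proof eventually_elim
    case (elim n)
    have "scaled_index (real n) 0 = n" by (simp add: scaled_index_def scaled_def)
    with psi_approx[OF elim] show ?case by simp
  qed
  show "(\<lambda>n. tail (real n)) \<longlonglongrightarrow> 0"
    by (rule filterlim_compose[OF tail_tendsto filterlim_real_sequentially])
qed

lemma psi_scale: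
  assumes "0 < t"
  shows "psi (\<alpha> * t) = psi t"
proof -
  have "scaled (\<alpha> * t) (Suc k) = scaled t k" for k
    using alpha by (simp add: scaled_def)
  then have "(\<lambda>k. f (scaled_index (\<alpha> * t) (Suc k))) \<longlonglongrightarrow> psi t"
    using orbit_converges[OF assms] by (simp add: scaled_index_def)
  then have "(\<lambda>k. f (scaled_index (\<alpha> * t) k)) \<longlonglongrightarrow> psi t" by (rule LIMSEQ_imp_Suc)
  then show ?thesis unfolding psi_def by (rule limI)
qed

lemma psi_lipschitz:
  assumes X: "0 < X" and K: "0 \<le> K"
    and Lip: "\<And>j m. X \<le> real j \<Longrightarrow> X \<le> real m \<Longrightarrow>
               \<bar>f j - f m\<bar> \<le> K * \<bar>real j - real m\<bar> / min (real j) (real m)"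
    and y: "0 < y" "y \<le> s" "y \<le> t"
  shows "\<bar>psi s - psi t\<bar> \<le> 2 * K / y * \<bar>s - t\<bar>"
proof -
  have sp: "0 < s" and tp: "0 < t" using y by auto
  have "eventually (\<lambda>k. \<bar>f (scaled_index s k) - f (scaled_index t k)\<bar>
                          \<le> 2 * K / y * \<bar>s - t\<bar> + 2 * K / y * \<alpha> ^ k) sequentially"
    using eventually_div_power_ge[OF alpha sp, of "max 2 (X + 1)"]
          eventually_div_power_ge[OF alpha tp, of "max 2 (X + 1)"]
  proof eventually_elim
    case (elim k)
    define i where "i = scaled_index s k"
    define j where "j = scaled_index t k"
    have ak: "0 < \<alpha> ^ k" using alpha by simp
    have i: "real i \<le> s / \<alpha> ^ k" "s / \<alpha> ^ k < real i + 1"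
      and j: "real j \<le> t / \<alpha> ^ k" "t / \<alpha> ^ k < real j + 1"
      using scaled_index_bounds[OF sp, of k] scaled_index_bounds[OF tp, of k]
      by (auto simp: i_def j_def scaled_def)
    have "y / \<alpha> ^ k \<le> s / \<alpha> ^ k" "y / \<alpha> ^ k \<le> t / \<alpha> ^ k"
      using y ak by (auto simp: divide_right_mono)
    then have min: "y / (2 * \<alpha> ^ k) \<le> min (real i) (real j)" using elim i j by auto
    have "\<bar>s / \<alpha> ^ k - t / \<alpha> ^ k\<bar> = \<bar>s - t\<bar> / \<alpha> ^ k"
      using ak by (simp add: diff_divide_distrib[symmetric] abs_divide)
    then have diff: "\<bar>real i - real j\<bar> \<le> \<bar>s - t\<bar> / \<alpha> ^ k + 1" using i j by linarith
    have "\<bar>f i - f j\<bar> \<le> K * \<bar>real i - real j\<bar> / min (real i) (real j)"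
      using elim i j by (intro Lip) auto
    also have "\<dots> \<le> K * (\<bar>s - t\<bar> / \<alpha> ^ k + 1) / (y / (2 * \<alpha> ^ k))"
      using K min diff y ak by (intro frac_le mult_left_mono) auto
    also have "\<dots> = 2 * K / y * \<bar>s - t\<bar> + 2 * K / y * \<alpha> ^ k"
      using ak y alpha by (simp add: field_simps)
    finally show ?case by (simp add: i_def j_def)
  qed
  moreover have "(\<lambda>k. \<bar>f (scaled_index s k) - f (scaled_index t k)\<bar>) \<longlonglongrightarrow> \<bar>psi s - psi t\<bar>"
    by (intro tendsto_intros orbit_converges sp tp)
  moreover have "(\<lambda>k. 2 * K / y * \<bar>s - t\<bar> + 2 * K / y * \<alpha> ^ k) \<longlonglongrightarrow> 2 * K / y * \<bar>s - t\<bar> + 2 * K / y * 0"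
    using alpha by (intro tendsto_intros LIMSEQ_realpow_zero) auto
  ultimately show ?thesis by (intro tendsto_le[OF sequentially_bot]) auto
qed

lemma psi_locally_lipschitz:
  assumes "0 < X" "0 \<le> K"
    and "\<And>j m. X \<le> real j \<Longrightarrow> X \<le> real m \<Longrightarrow>
               \<bar>f j - f m\<bar> \<le> K * \<bar>real j - real m\<bar> / min (real j) (real m)"
    and x: "0 < x"
  shows "(4 * K / x)-lipschitz_on (ball x (x / 2) \<inter> {0<..}) psi"
proof (unfold lipschitz_on_def, intro conjI ballI)
  show "0 \<le> 4 * K / x" using assms by simp
  fix s t assume "s \<in> ball x (x / 2) \<inter> {0<..}" "t \<in> ball x (x / 2) \<inter> {0<..}"
  then have "\<bar>x - s\<bar> < x / 2" "\<bar>x - t\<bar> < x / 2" by (auto simp: dist_real_def)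
  then have "x / 2 \<le> s" "x / 2 \<le> t" by linarith+
  from psi_lipschitz[OF assms(1-3) _ this] x show "dist (psi s) (psi t) \<le> 4 * K / x * dist s t"
    by (simp add: dist_real_def)
qed

lemma psi_continuous:
  assumes "0 < X" "0 \<le> K"
    and "\<And>j m. X \<le> real j \<Longrightarrow> X \<le> real m \<Longrightarrow>
               \<bar>f j - f m\<bar> \<le> K * \<bar>real j - real m\<bar> / min (real j) (real m)"
  shows "continuous_on {0<..} psi"
proof (intro continuous_at_imp_continuous_on ballI)
  fix x :: real assume "x \<in> {0<..}"
  then have x: "0 < x" by simp
  have "ball x (x / 2) \<subseteq> {0<..}"
  proof
    fix z assume "z \<in> ball x (x / 2)"
    then have "\<bar>x - z\<bar> < x / 2" by (simp add: dist_real_def)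
    then have "x - z < x / 2" by (simp only: abs_less_iff)
    then show "z \<in> {0<..}" using x by simp
  qed
  then have "continuous_on (ball x (x / 2)) psi"
    using lipschitz_on_continuous_on[OF psi_locally_lipschitz[OF assms x]] by (simp add: Int_absorb2)
  then show "isCont psi x" using x by (simp add: continuous_on_eq_continuous_at)
qed

end

lemma (in concentrated_chain) le_end_prob_harmonic_on_chain:
  assumes "i \<le> a"
  shows "harmonic_on_chain Y \<alpha> \<epsilon> C D T \<delta> N (le_end_prob Y a i) a"
proof unfold_locales
  show "0 \<le> le_end_prob Y a i n \<and> le_end_prob Y a i n \<le> 1" for n
    using assms by (rule le_end_prob_bounds)
  show "le_end_prob Y a i n = measure_pmf.expectation (Y n) (le_end_prob Y a i)" if "a < n" for n
    using assms that support[of n] by (intro le_end_prob_harmonic) auto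
qed

theorem theorem2p2:
  fixes Y :: "nat \<Rightarrow> nat pmf" and \<alpha> :: real and a :: nat
  assumes "condition1 Y \<alpha>" and "a \<ge> 1"
  shows "\<forall>i\<in>{1..a}. \<exists>\<psi> :: real \<Rightarrow> real.
           continuous_on {0<..} \<psi> \<and>
           (\<forall>x>0. \<exists>r>0. \<exists>L. L-lipschitz_on (ball x r \<inter> {0<..}) \<psi>) \<and>
           (\<forall>t>0. \<psi> (\<alpha> * t) = \<psi> t) \<and>
           (\<lambda>n. le_end_prob Y a i n - \<psi> (real n)) \<longlonglongrightarrow> 0"
proof
  fix i assume i: "i \<in> {1..a}"
  obtain \<epsilon> C D T \<delta> N where chain: "concentrated_chain Y \<alpha> \<epsilon> C D T \<delta> N"
    using condition1_concentrated_chain[OF assms(1)] .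
  have "i \<le> a" using i by simp
  with chain interpret harmonic_on_chain Y \<alpha> \<epsilon> C D T \<delta> N "le_end_prob Y a i" a
    by (rule concentrated_chain.le_end_prob_harmonic_on_chain)
  obtain X K where X: "0 < X" and K: "0 \<le> K"
    and step: "\<And>l. X \<le> real l \<Longrightarrow> \<bar>le_end_prob Y a i (Suc l) - le_end_prob Y a i l\<bar> \<le> K / real l"
    using increment_bound by blast
  note Lip = increments_lipschitz[OF X step]
  obtain H N1 where "0 \<le> H" and slow: "\<And>n m. N1 \<le> n \<Longrightarrow> \<bar>real m - \<alpha> * real n\<bar> \<le> 2 \<Longrightarrow>
      \<bar>le_end_prob Y a i n - le_end_prob Y a i m\<bar> \<le> H * ln (real n) powr (-1-\<epsilon>)"
    using slow_variation[OF X K Lip] by blast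
  interpret slowly_varying "le_end_prob Y a i" \<alpha> \<epsilon> H N1
    using alpha eps \<open>0 \<le> H\<close> slow by unfold_locales auto
  show "\<exists>\<psi>. continuous_on {0<..} \<psi> \<and>
           (\<forall>x>0. \<exists>r>0. \<exists>L. L-lipschitz_on (ball x r \<inter> {0<..}) \<psi>) \<and>
           (\<forall>t>0. \<psi> (\<alpha> * t) = \<psi> t) \<and>
           (\<lambda>n. le_end_prob Y a i n - \<psi> (real n)) \<longlonglongrightarrow> 0"
  proof (intro exI[of _ psi] conjI allI impI)
    fix x :: real assume "0 < x"
    then show "\<exists>r>0. \<exists>L. L-lipschitz_on (ball x r \<inter> {0<..}) psi"
      using psi_locally_lipschitz[OF X K Lip] by (intro exI[of _ "x / 2"]) auto
  qed (use psi_continuous[OF X K Lip] psi_scale f_minus_psi_tendsto in auto)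
qed

end
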